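(* Let $A_1,\dots,A_{20}$ be the vertices of a regular dodecahedron in $\mathbb R^3$ and let $\Gamma$ be its circumscribed sphere. There are at most eight real numbers $\lambda$ for which the function $M\mapsto\sum_{i=1}^{20}|MA_i|^{\lambda}$ is constant on $\Gamma\setminus\{A_1,\dots,A_{20}\}$.
   Context: $|MA|$ denotes Euclidean distance. *)

theory Defs
  imports "HOL-Analysis.Analysis"
begin

definition golden :: real where
  "golden = (1 + sqrt 5) / 2"

definition std_dodecahedron_vertices :: "(real^3) set" where
  "std_dodecahedron_vertices =
     {vector [a, b, c] | a b c. a \<in> {-1, 1} \<and> b \<in> {-1, 1} \<and> c \<in> {-1, 1}}
   \<union> {vector [0, s / golden, t * golden] | s t. s \<in> {-1, 1} \<and> t \<in> {-1, 1}}
   \<union> {vector [s / golden, t * golden, 0] | s t. s \<in> {-1, 1} \<and> t \<in> {-1, 1}}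
   \<union> {vector [t * golden, 0, s / golden] | s t. s \<in> {-1, 1} \<and> t \<in> {-1, 1}}"

definition regular_dodecahedron_vertices :: "(real^3) set \<Rightarrow> bool" where
  "regular_dodecahedron_vertices V \<longleftrightarrow>
     (\<exists>c r f. r > 0 \<and> orthogonal_transformation f \<and>
        V = (\<lambda>v. c + r *\<^sub>R f v) ` std_dodecahedron_vertices)"

end

theory Submission
  imports Defs
begin

(* By Descartes' rule of signs for exponential sums, a function
     l |-> sum_j c j * b j powr l     (0 < b 0 < ... < b (n-1), all c j nonzero)
   has at most as many real zeros as the sequence c has sign changes.  Take two
   points test_P and test_Q of the circumsphere of the standard dodecahedron which are
   not vertices.  If l is admissible, the power sums at these two points agree, so l
   is a zero of the difference of the two power sums.  Grouping the twenty distances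
   by their seventeen distinct values exhibits this difference as such a sum whose
   coefficients change sign eight times, whence at most eight admissible l. *)

lemma interlaced_card_below_max:
  fixes Z Z' :: "'a::linorder set"
  assumes fin': "finite Z'"
    and between: "\<And>s t. s \<in> Z \<Longrightarrow> t \<in> Z \<Longrightarrow> s < t \<Longrightarrow> \<exists>z\<in>Z'. s < z \<and> z < t"
    and T: "finite T" "T \<subseteq> Z"
  shows "T \<noteq> {} \<longrightarrow> card T \<le> card {z\<in>Z'. z < Max T} + 1"
  using T
proof (induction T rule: finite_linorder_max_induct)
  case empty
  then show ?case by simp
next
  case (insert b A)
  show ?case
  proof (cases "A = {}")
    case True
    then show ?thesis by simp
  next
    case False
    have max_A: "Max A \<in> A" "Max A < b" using insert.hyps False by auto
    have max_bA: "Max (insert b A) = b"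
      using Max_insert[OF insert.hyps(1) False, of b] max_A(2) by simp
    obtain z where z: "z \<in> Z'" "Max A < z" "z < b"
      using between[of "Max A" b] max_A insert.prems by auto
    have "card {y\<in>Z'. y < Max A} + 1 = card (insert z {y\<in>Z'. y < Max A})"
      using z fin' by simp
    also have "\<dots> \<le> card {y\<in>Z'. y < b}"
      using z max_A fin' by (intro card_mono) auto
    finally have "card {y\<in>Z'. y < Max A} + 1 \<le> card {y\<in>Z'. y < b}" .
    moreover have "card (insert b A) = card A + 1"
      using insert.hyps by auto
    ultimately show ?thesis
      using insert.IH insert.prems False max_bA by auto
  qed
qed

lemma interlaced_card_bound:
  fixes Z Z' :: "'a::linorder set"
  assumes fin': "finite Z'"
    and between: "\<And>s t. s \<in> Z \<Longrightarrow> t \<in> Z \<Longrightarrow> s < t \<Longrightarrow> \<exists>z\<in>Z'. s < z \<and> z < t"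
  shows "finite Z \<and> card Z \<le> card Z' + 1"
proof -
  have bound: "card T \<le> card Z' + 1" if "finite T" "T \<subseteq> Z" for T
  proof (cases "T = {}")
    case False
    have "card {z\<in>Z'. z < Max T} \<le> card Z'"
      using fin' by (intro card_mono) auto
    then show ?thesis using interlaced_card_below_max[OF fin' between that] False by simp
  qed simp
  have "finite Z"
  proof (rule ccontr)
    assume "infinite Z"
    then obtain T where "T \<subseteq> Z" "finite T" "card T = card Z' + 2"
      using infinite_arbitrarily_large by blast
    then show False using bound by fastforce
  qed
  then show ?thesis using bound by simp
qed

lemma card_zeros_le_card_deriv_zeros:
  fixes f f' :: "real \<Rightarrow> real"
  assumes deriv: "\<And>x. (f has_real_derivative f' x) (at x)"
    and fin: "finite {x. f' x = 0}"
  shows "finite {x. f x = 0} \<and> card {x. f x = 0} \<le> card {x. f' x = 0} + 1"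
proof (rule interlaced_card_bound[OF fin])
  fix s t assume st: "s \<in> {x. f x = 0}" "t \<in> {x. f x = 0}" "s < t"
  have "continuous_on {s..t} f"
    using deriv by (meson DERIV_isCont continuous_at_imp_continuous_on)
  then obtain z where "s < z" "z < t" "(f has_real_derivative 0) (at z)"
    using Rolle[OF \<open>s < t\<close>, of f] st deriv real_differentiable_def by force
  then show "\<exists>z\<in>{x. f' x = 0}. s < z \<and> z < t"
    using DERIV_unique[OF deriv] by blast
qed

definition sign_changes :: "(nat \<Rightarrow> real) \<Rightarrow> nat \<Rightarrow> nat set" where
  "sign_changes c n = {k. Suc k < n \<and> c k * c (Suc k) < 0}"

lemma finite_sign_changes: "finite (sign_changes c n)"
  unfolding sign_changes_def by (rule finite_subset[of _ "{..<n}"]) auto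

lemma sign_changes_upt:
  "sign_changes c n = set (filter (\<lambda>k. c k * c (Suc k) < 0) [0..<n - 1])"
  unfolding sign_changes_def by auto

lemma no_sign_change_same_sign:
  fixes c :: "nat \<Rightarrow> real"
  assumes nz: "\<And>j. j < n \<Longrightarrow> c j \<noteq> 0" and none: "sign_changes c n = {}"
  shows "j < n \<Longrightarrow> c 0 * c j > 0"
proof (induction j)
  case 0
  then show ?case using nz[of 0] by (auto simp: zero_less_mult_iff linorder_neq_iff)
next
  case (Suc j)
  have "\<not> c j * c (Suc j) < 0" using none Suc.prems unfolding sign_changes_def by blast
  then have "c j * c (Suc j) > 0"
    using nz[of j] nz[of "Suc j"] Suc.prems by (simp add: linorder_not_less order_le_less)
  moreover have "c 0 * c j > 0" using Suc by simp
  ultimately have "(c 0 * c j) * (c j * c (Suc j)) > 0" by simp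
  then have "(c j * c j) * (c 0 * c (Suc j)) > 0" by (simp add: algebra_simps)
  then show ?case by (simp add: zero_less_mult_iff)
qed

lemma strict_mono_on_gap:
  fixes a :: "nat \<Rightarrow> real"
  assumes mono: "strict_mono_on {..<n} a" and kn: "Suc k < n"
    and \<mu>: "a k < \<mu>" "\<mu> < a (Suc k)" and i: "i < n"
  shows "(a i < \<mu> \<longleftrightarrow> i \<le> k) \<and> a i \<noteq> \<mu>"
proof (cases "i \<le> k")
  case True
  then have "a i \<le> a k" using strict_mono_on_less_eq[OF mono] i kn by simp
  then show ?thesis using True \<mu> by simp
next
  case False
  then have "a (Suc k) \<le> a i" using strict_mono_on_less_eq[OF mono] i kn by simp
  then show ?thesis using False \<mu> by simp
qed

lemma shifted_product_sign:
  fixes c a :: "nat \<Rightarrow> real"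
  assumes mono: "strict_mono_on {..<n} a"
    and k: "k \<in> sign_changes c n"
    and \<mu>: "a k < \<mu>" "\<mu> < a (Suc k)"
    and j: "Suc j < n"
  shows "c j * (a j - \<mu>) * (c (Suc j) * (a (Suc j) - \<mu>)) < 0 \<longleftrightarrow> c j * c (Suc j) < 0 \<and> j \<noteq> k"
proof -
  have kn: "Suc k < n" using k unfolding sign_changes_def by simp
  have factor: "(a j - \<mu>) * (a (Suc j) - \<mu>) < 0 \<longleftrightarrow> j = k"
    and factor_nz: "(a j - \<mu>) * (a (Suc j) - \<mu>) \<noteq> 0"
    using strict_mono_on_gap[OF mono kn \<mu>, of j] strict_mono_on_gap[OF mono kn \<mu>, of "Suc j"] j
    by (auto simp: mult_less_0_iff)
  have eq: "c j * (a j - \<mu>) * (c (Suc j) * (a (Suc j) - \<mu>))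
        = (c j * c (Suc j)) * ((a j - \<mu>) * (a (Suc j) - \<mu>))" by (simp add: algebra_simps)
  show ?thesis
  proof (cases "j = k")
    case True
    then have "c j * c (Suc j) < 0" using k unfolding sign_changes_def by simp
    moreover have "(a j - \<mu>) * (a (Suc j) - \<mu>) < 0" using factor True by simp
    ultimately have "0 < (c j * c (Suc j)) * ((a j - \<mu>) * (a (Suc j) - \<mu>))"
      by (rule mult_neg_neg)
    then show ?thesis unfolding eq using True by simp
  next
    case False
    then have "(a j - \<mu>) * (a (Suc j) - \<mu>) > 0"
      using factor factor_nz by linarith
    moreover have "\<And>x y :: real. 0 < y \<Longrightarrow> x * y < 0 \<longleftrightarrow> x < 0"
      by (simp add: mult_less_0_iff)
    ultimately show ?thesis unfolding eq using False by simp
  qed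
qed

(* Hence this shift removes exactly the sign change at k.  This is what multiplying by
   an exponential and differentiating does to an exponential sum. *)
lemma sign_changes_after_shift:
  fixes c a :: "nat \<Rightarrow> real"
  assumes mono: "strict_mono_on {..<n} a"
    and k: "k \<in> sign_changes c n"
    and \<mu>: "a k < \<mu>" "\<mu> < a (Suc k)"
  shows "sign_changes (\<lambda>j. c j * (a j - \<mu>)) n = sign_changes c n - {k}"
proof (rule set_eqI)
  fix j
  show "j \<in> sign_changes (\<lambda>j. c j * (a j - \<mu>)) n \<longleftrightarrow> j \<in> sign_changes c n - {k}"
    using shifted_product_sign[OF mono k \<mu>, of j] unfolding sign_changes_def
    by (cases "Suc j < n") simp_all
qed

(* Induction on the number of sign changes: multiplying by exp (- mu * x) and
   differentiating gives an exponential sum with one sign change fewer, and Rolle's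
   theorem loses at most one zero. *)
lemma exp_sum_zeros_le_sign_changes:
  fixes c a :: "nat \<Rightarrow> real"
  assumes "n > 0" and "\<And>j. j < n \<Longrightarrow> c j \<noteq> 0" and "strict_mono_on {..<n} a"
  shows "finite {x. (\<Sum>j<n. c j * exp (a j * x)) = 0}
       \<and> card {x. (\<Sum>j<n. c j * exp (a j * x)) = 0} \<le> card (sign_changes c n)"
  using assms(2,3)
proof (induction "card (sign_changes c n)" arbitrary: c a)
  case 0
  then have "sign_changes c n = {}" using finite_sign_changes by simp
  then have same_sign: "c 0 * c j > 0" if "j < n" for j
    using no_sign_change_same_sign[of n c j] 0 that by blast
  have "(\<Sum>j<n. c j * exp (a j * x)) \<noteq> 0" for x
  proof -
    have "c 0 * (\<Sum>j<n. c j * exp (a j * x)) = (\<Sum>j<n. (c 0 * c j) * exp (a j * x))"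
      by (simp add: sum_distrib_left algebra_simps)
    also have "\<dots> > 0"
      using same_sign \<open>n > 0\<close> by (intro sum_pos) auto
    finally show ?thesis by auto
  qed
  then show ?case by simp
next
  case (Suc m c a)
  obtain k where k: "k \<in> sign_changes c n"
    using Suc.hyps(2) by (metis card.empty ex_in_conv nat.simps(3))
  have kn: "Suc k < n" using k unfolding sign_changes_def by simp
  define \<mu> where "\<mu> = (a k + a (Suc k)) / 2"
  have \<mu>: "a k < \<mu>" "\<mu> < a (Suc k)"
    using strict_mono_onD[OF Suc.prems(2), of k "Suc k"] kn unfolding \<mu>_def by auto
  define c' where "c' j = c j * (a j - \<mu>)" for j
  define a' where "a' j = a j - \<mu>" for j
  have "sign_changes c' n = sign_changes c n - {k}"
    unfolding c'_def using sign_changes_after_shift[OF Suc.prems(2) k \<mu>] .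
  then have "m = card (sign_changes c' n)"
    using k finite_sign_changes Suc.hyps(2) by simp
  moreover have "c' j \<noteq> 0" if "j < n" for j
    using strict_mono_on_gap[OF Suc.prems(2) kn \<mu> that] Suc.prems(1)[OF that]
    unfolding c'_def by simp
  moreover have "strict_mono_on {..<n} a'"
    using Suc.prems(2) unfolding a'_def strict_mono_on_def by simp
  ultimately have IH: "finite {x. (\<Sum>j<n. c' j * exp (a' j * x)) = 0}
      \<and> card {x. (\<Sum>j<n. c' j * exp (a' j * x)) = 0} \<le> m"
    using Suc.hyps(1) by blast
  \<comment> \<open>Multiplying by \<open>exp (- \<mu> * x)\<close> keeps the zeros and turns the derivative into
    the exponential sum with coefficients \<open>c'\<close>.\<close>
  define g where "g x = (\<Sum>j<n. c j * exp (a' j * x))" for x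
  have "(g has_real_derivative (\<Sum>j<n. c' j * exp (a' j * x))) (at x)" for x
    unfolding g_def c'_def a'_def
    by (auto intro!: derivative_eq_intros sum.cong simp: algebra_simps)
  then have g_zeros: "finite {x. g x = 0} \<and> card {x. g x = 0} \<le> m + 1"
    using card_zeros_le_card_deriv_zeros IH by fastforce
  have "g x = exp (- \<mu> * x) * (\<Sum>j<n. c j * exp (a j * x))" for x
    unfolding g_def a'_def sum_distrib_left
    by (rule sum.cong) (auto simp: algebra_simps exp_add[symmetric])
  then have "{x. g x = 0} = {x. (\<Sum>j<n. c j * exp (a j * x)) = 0}" by auto
  then show ?case using g_zeros Suc.hyps(2) by auto
qed

lemma powr_sum_zeros_le_sign_changes:
  fixes c b :: "nat \<Rightarrow> real"
  assumes "n > 0" and "\<And>j. j < n \<Longrightarrow> c j \<noteq> 0"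
    and pos: "\<And>j. j < n \<Longrightarrow> b j > 0" and mono: "strict_mono_on {..<n} b"
  shows "finite {l. (\<Sum>j<n. c j * b j powr l) = 0}
       \<and> card {l. (\<Sum>j<n. c j * b j powr l) = 0} \<le> card (sign_changes c n)"
proof -
  have "strict_mono_on {..<n} (\<lambda>j. ln (b j))"
    using strict_mono_onD[OF mono] pos by (intro strict_mono_onI) auto
  then have zeros: "finite {l. (\<Sum>j<n. c j * exp (ln (b j) * l)) = 0}
      \<and> card {l. (\<Sum>j<n. c j * exp (ln (b j) * l)) = 0} \<le> card (sign_changes c n)"
    using exp_sum_zeros_le_sign_changes assms(1,2) by blast
  have "(\<Sum>j<n. c j * b j powr l) = (\<Sum>j<n. c j * exp (ln (b j) * l))" for l
    using pos by (intro sum.cong) (auto simp: powr_def mult.commute less_imp_neq[symmetric])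
  then show ?thesis using zeros by simp
qed

lemma similarity_dist:
  fixes f :: "'a::real_inner \<Rightarrow> 'a"
  assumes f: "orthogonal_transformation f" and r: "r > 0"
  shows "dist (c + r *\<^sub>R f w) (c + r *\<^sub>R f v) = r * dist w v"
proof -
  have "(c + r *\<^sub>R f w) - (c + r *\<^sub>R f v) = r *\<^sub>R f (w - v)"
    using linear_diff[OF orthogonal_transformation_linear[OF f]] by (simp add: scaleR_diff_right)
  then show ?thesis using r by (simp add: dist_norm orthogonal_transformation_norm[OF f])
qed

lemma similarity_powr_sum:
  fixes f :: "'a::real_inner \<Rightarrow> 'a"
  assumes f: "orthogonal_transformation f" and r: "r > 0" and S: "finite S"
  shows "(\<Sum>A\<in>(\<lambda>v. c + r *\<^sub>R f v) ` S. dist (c + r *\<^sub>R f w) A powr l)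
       = r powr l * (\<Sum>v\<in>S. dist w v powr l)"
proof -
  have "inj (\<lambda>v. c + r *\<^sub>R f v)"
    using orthogonal_transformation_inj[OF f] r by (simp add: inj_def)
  then have "(\<Sum>A\<in>(\<lambda>v. c + r *\<^sub>R f v) ` S. dist (c + r *\<^sub>R f w) A powr l)
      = (\<Sum>v\<in>S. dist (c + r *\<^sub>R f w) (c + r *\<^sub>R f v) powr l)"
    by (simp add: sum.reindex inj_on_subset)
  also have "\<dots> = (\<Sum>v\<in>S. r powr l * dist w v powr l)"
    by (rule sum.cong[OF refl]) (simp only: similarity_dist[OF f r] powr_mult r less_imp_le zero_le_dist)
  finally show ?thesis by (simp add: sum_distrib_left)
qed

(* The centre of a sphere through the image of S under a similarity is the image of
   the origin, provided the antipodal pairs of S are not contained in a hyperplane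
   through the origin: the centre has the same distance to the images of v and -v,
   so its offset is orthogonal to f v for every such pair. *)
lemma similarity_sphere_centre:
  fixes f :: "'a::euclidean_space \<Rightarrow> 'a"
  assumes f: "orthogonal_transformation f" and r: "r > 0"
    and sphere: "(\<lambda>v. c' + r *\<^sub>R f v) ` S \<subseteq> sphere c R"
    and antipodes_span: "\<And>u. (\<And>v. v \<in> S \<Longrightarrow> - v \<in> S \<Longrightarrow> inner u v = 0) \<Longrightarrow> u = 0"
  shows "c' = c"
proof -
  obtain u where u: "f u = c' - c" using orthogonal_transformation_surj[OF f] by (metis surj_def)
  have on_sphere: "norm (f u + r *\<^sub>R f w) = R" if "w \<in> S" for w
  proof -
    have "dist c (c' + r *\<^sub>R f w) = R" using sphere that by auto
    moreover have "f u + r *\<^sub>R f w = (c' + r *\<^sub>R f w) - c" using u by simp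
    ultimately show ?thesis by (metis dist_norm dist_commute)
  qed
  have "inner u v = 0" if "v \<in> S" "- v \<in> S" for v
  proof -
    have "f (- v) = - f v"
      using linear_neg[OF orthogonal_transformation_linear[OF f]] .
    then have "norm (f u + r *\<^sub>R f v) = norm (f u - r *\<^sub>R f v)"
      using on_sphere[OF that(1)] on_sphere[OF that(2)] by simp
    then have "(norm (f u + r *\<^sub>R f v))^2 = (norm (f u - r *\<^sub>R f v))^2" by simp
    then have "4 * r * inner (f u) (f v) = 0"
      by (simp add: power2_norm_eq_inner inner_add_left inner_add_right inner_diff_left
          inner_diff_right inner_commute algebra_simps)
    then show ?thesis
      using r f unfolding orthogonal_transformation_def by simp
  qed
  then have "u = 0" by (rule antipodes_span)
  then show ?thesis
    using u linear_0[OF orthogonal_transformation_linear[OF f]] by simp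
qed

lemma similarity_maps_sphere:
  fixes f :: "'a::real_inner \<Rightarrow> 'a"
  assumes f: "orthogonal_transformation f" and r: "r > 0"
    and w: "norm w = \<rho>" "w \<notin> S"
  shows "c + r *\<^sub>R f w \<in> sphere c (r * \<rho>) - (\<lambda>v. c + r *\<^sub>R f v) ` S"
proof -
  have "f w \<notin> f ` S"
    using w(2) orthogonal_transformation_inj[OF f] by (simp add: inj_image_mem_iff)
  then show ?thesis
    using w r by (auto simp: dist_norm orthogonal_transformation_norm[OF f])
qed

definition std_vertex_list :: "(real^3) list" where
 "std_vertex_list =
   [vector [-1,-1,-1], vector [-1,-1,1], vector [-1,1,-1], vector [-1,1,1],
    vector [1,-1,-1], vector [1,-1,1], vector [1,1,-1], vector [1,1,1],
    vector [0, -1/golden, -golden], vector [0, -1/golden, golden],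
    vector [0, 1/golden, -golden], vector [0, 1/golden, golden],
    vector [-1/golden, -golden, 0], vector [-1/golden, golden, 0],
    vector [1/golden, -golden, 0], vector [1/golden, golden, 0],
    vector [-golden, 0, -1/golden], vector [golden, 0, -1/golden],
    vector [-golden, 0, 1/golden], vector [golden, 0, 1/golden]]"

lemma setcompr2_eq_image: "{f s t | s t. s \<in> A \<and> t \<in> B} = (\<lambda>(s, t). f s t) ` (A \<times> B)"
  by auto

lemma setcompr3_eq_image:
  "{f a b c | a b c. a \<in> A \<and> b \<in> B \<and> c \<in> C} = (\<lambda>(a, b, c). f a b c) ` (A \<times> B \<times> C)"
  by (auto simp: image_iff) (metis mem_Sigma_iff case_prod_conv)

lemma std_vertex_list_set: "std_dodecahedron_vertices = set std_vertex_list"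
  unfolding std_dodecahedron_vertices_def std_vertex_list_def setcompr2_eq_image setcompr3_eq_image
  by auto

lemma vector3_eq_iff:
  "(vector [a, b, c] :: real^3) = vector [a', b', c'] \<longleftrightarrow> a = a' \<and> b = b' \<and> c = c'"
  by (auto simp: vec_eq_iff forall_3)

lemma norm_vector3: "norm (vector [a, b, c] :: real^3) = sqrt (a^2 + b^2 + c^2)"
  by (simp add: norm_vec_def L2_set_def sum_3)

lemma dist_vector3:
  "dist (vector [a, b, c] :: real^3) (vector [a', b', c']) = sqrt ((a - a')^2 + (b - b')^2 + (c - c')^2)"
  by (simp add: dist_norm norm_vec_def L2_set_def sum_3)

lemma inner_vector3: "inner u (vector [a, b, c] :: real^3) = u$1 * a + u$2 * b + u$3 * c"
  by (simp add: inner_vec_def sum_3)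

lemma uminus_vector3: "- (vector [a, b, c] :: real^3) = vector [-a, -b, -c]"
  by (simp add: vec_eq_iff forall_3)

lemma golden_gt_1: "golden > 1"
  unfolding golden_def using real_sqrt_gt_1_iff[of 5] by simp

lemma inverse_golden: "1 / golden = (sqrt 5 - 1) / 2"
proof -
  have "sqrt 5 * sqrt 5 = (5::real)" by simp
  moreover have "1 + sqrt 5 > (0::real)" by (simp add: add_pos_nonneg)
  ultimately show ?thesis unfolding golden_def by (simp add: field_simps)
qed

lemma golden_sq_plus_inverse_sq: "golden^2 + (1 / golden)^2 = 3"
  unfolding inverse_golden unfolding golden_def power2_eq_square
  by (simp add: algebra_simps) (simp add: field_simps)

lemma distinct_std_vertex_list: "distinct std_vertex_list"
proof -
  have "0 < 1 / golden" "1 / golden < 1" using golden_gt_1 by auto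
  then have "golden \<noteq> 1" "golden \<noteq> -1" "golden \<noteq> 0" "1/golden \<noteq> 1" "1/golden \<noteq> -1"
    "1/golden \<noteq> 0" "1/golden \<noteq> golden" "1/golden \<noteq> -golden" "-(1/golden) \<noteq> golden"
    using golden_gt_1 by linarith+
  then show ?thesis unfolding std_vertex_list_def by (simp add: vector3_eq_iff)
qed

lemma sum_std_vertices: "(\<Sum>v\<in>std_dodecahedron_vertices. g v) = sum_list (map g std_vertex_list)"
  by (simp add: std_vertex_list_set sum.distinct_set_conv_list distinct_std_vertex_list)

(* The antipodal vertex pairs (+-1,+-1,+-1) span R^3; with similarity_sphere_centre
   this pins down the circumcentre. *)
lemma std_antipodes_span:
  assumes "\<And>v. v \<in> std_dodecahedron_vertices \<Longrightarrow> - v \<in> std_dodecahedron_vertices \<Longrightarrow> inner u v = 0"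
  shows "u = 0"
proof -
  have "inner u (vector [1, 1, 1]) = 0" "inner u (vector [1, 1, -1]) = 0"
    "inner u (vector [1, -1, 1]) = 0" "inner u (vector [-1, 1, 1]) = 0"
    using assms unfolding std_vertex_list_set by (simp_all add: std_vertex_list_def uminus_vector3)
  then show ?thesis unfolding inner_vector3 by (simp add: vec_eq_iff forall_3)
qed

lemma std_vertices_norm: "v \<in> std_dodecahedron_vertices \<Longrightarrow> norm v = sqrt 3"
  using golden_sq_plus_inverse_sq
  by (auto simp: std_vertex_list_set std_vertex_list_def norm_vector3 power2_eq_square add_ac)

lemma regular_dodecahedron_normal_form:
  assumes "regular_dodecahedron_vertices V" and "V \<subseteq> sphere c R"
  obtains r f where "r > 0" "orthogonal_transformation f"
    "V = (\<lambda>v. c + r *\<^sub>R f v) ` std_dodecahedron_vertices" "R = r * sqrt 3"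
proof -
  obtain c' r f where r: "r > 0" and f: "orthogonal_transformation f"
    and V: "V = (\<lambda>v. c' + r *\<^sub>R f v) ` std_dodecahedron_vertices"
    using assms(1) unfolding regular_dodecahedron_vertices_def by blast
  have "c' = c"
    using similarity_sphere_centre[OF f r _ std_antipodes_span] assms(2) V by blast
  have "vector [1, 1, 1] \<in> std_dodecahedron_vertices"
    by (simp add: std_vertex_list_set std_vertex_list_def)
  then have "R = r * sqrt 3"
    using assms(2) std_vertices_norm r unfolding V \<open>c' = c\<close>
    by (auto simp: dist_norm orthogonal_transformation_norm[OF f])
  then show ?thesis using that r f V \<open>c' = c\<close> by blast
qed

(* Two points of the circumsphere which are not vertices.  Their squared distances to
   the twenty vertices take the seventeen values sq_dists (in increasing order); the
   i-th vertex of std_vertex_list has distance sqrt (sq_dists ! (profile_P ! i)) from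
   test_P, and similarly for test_Q.  multiplicity_diff ! j is the number of vertices
   at distance sqrt (sq_dists ! j) from test_P minus the number at that distance from
   test_Q; it changes sign eight times. *)
definition test_P :: "real^3" where "test_P = vector [golden, 1 / golden, 0]"
definition test_Q :: "real^3" where "test_Q = vector [sqrt 3, 0, 0]"

definition sq_dists :: "real list" where
  "sq_dists =
    [6 - sqrt 3 - sqrt 3 * sqrt 5, 3 - sqrt 5, 6 - 2 * sqrt 5, 2, 6 - 2 * sqrt 3,
     6 + sqrt 3 - sqrt 3 * sqrt 5, 4, 3 + sqrt 5, 6, 9 - sqrt 5, 8, 6 - sqrt 3 + sqrt 3 * sqrt 5,
     6 + 2 * sqrt 3, 10, 6 + 2 * sqrt 5, 9 + sqrt 5, 6 + sqrt 3 + sqrt 3 * sqrt 5]"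

definition profile_P :: "nat list" where
  "profile_P = [14, 14, 10, 10, 6, 6, 2, 2, 9, 9, 7, 7, 13, 8, 8, 3, 15, 1, 15, 1]"

definition profile_Q :: "nat list" where
  "profile_Q = [12, 12, 12, 12, 4, 4, 4, 4, 8, 8, 8, 8, 11, 11, 5, 5, 16, 0, 16, 0]"

definition multiplicity_diff :: "real list" where
  "multiplicity_diff = [-2, 2, 2, 1, -4, -2, 2, 2, -2, 2, 2, -2, -4, 1, 2, 2, -2]"

lemma dist_profile_P:
  "map (dist test_P) std_vertex_list = map (\<lambda>i. sqrt (sq_dists ! i)) profile_P"
  unfolding test_P_def std_vertex_list_def sq_dists_def profile_P_def
  by (simp add: dist_vector3 inverse_golden del: divide_const_simps)
    (simp add: golden_def power2_eq_square algebra_simps; simp add: field_simps)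

lemma dist_profile_Q:
  "map (dist test_Q) std_vertex_list = map (\<lambda>i. sqrt (sq_dists ! i)) profile_Q"
  unfolding test_Q_def std_vertex_list_def sq_dists_def profile_Q_def
  by (simp add: dist_vector3 inverse_golden del: divide_const_simps)
    (simp add: golden_def power2_eq_square algebra_simps; simp add: field_simps)

lemma sqrt_bounds:
  "2.236 < sqrt (5::real)" "sqrt (5::real) < 2.237"
  "1.732 < sqrt (3::real)" "sqrt (3::real) < 1.733"
  "3.872 < sqrt 3 * sqrt (5::real)" "sqrt 3 * sqrt (5::real) < 3.873"
  unfolding real_sqrt_mult[symmetric]
  by (intro real_less_rsqrt real_less_lsqrt; simp add: power2_eq_square)+

lemma sq_dists_sorted: "sorted_wrt (<) sq_dists"
  using sqrt_bounds by (simp add: sq_dists_def sorted_wrt2)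

lemma sq_dists_pos: "j < 17 \<Longrightarrow> sq_dists ! j > 0"
proof -
  assume "j < 17"
  moreover have "sq_dists ! 0 > 0" using sqrt_bounds by (simp add: sq_dists_def)
  ultimately show ?thesis
    using sorted_wrt_nth_less[OF sq_dists_sorted, of 0 j] by (cases "j = 0") (auto simp: sq_dists_def)
qed

lemma norm_test_P: "norm test_P = sqrt 3"
  unfolding test_P_def norm_vector3 using golden_sq_plus_inverse_sq by simp

lemma norm_test_Q: "norm test_Q = sqrt 3"
  unfolding test_Q_def norm_vector3 by simp

lemma not_vertex_if_profile:
  assumes "map (dist M) std_vertex_list = map (\<lambda>i. sqrt (sq_dists ! i)) is"
    and "set is \<subseteq> {..<17}"
  shows "M \<notin> std_dodecahedron_vertices"
proof
  assume "M \<in> std_dodecahedron_vertices"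
  then have "dist M M \<in> set (map (\<lambda>i. sqrt (sq_dists ! i)) is)"
    unfolding std_vertex_list_set assms(1)[symmetric] by simp
  then show False using assms(2) sq_dists_pos by fastforce
qed

lemma test_points_not_vertices:
  "test_P \<notin> std_dodecahedron_vertices" "test_Q \<notin> std_dodecahedron_vertices"
  by (rule not_vertex_if_profile[OF dist_profile_P], simp add: profile_P_def)
     (rule not_vertex_if_profile[OF dist_profile_Q], simp add: profile_Q_def)

lemma test_points_power_sum_difference:
  "(\<Sum>v\<in>std_dodecahedron_vertices. dist test_P v powr l)
     - (\<Sum>v\<in>std_dodecahedron_vertices. dist test_Q v powr l)
   = (\<Sum>j<17. multiplicity_diff ! j * sqrt (sq_dists ! j) powr l)"
proof -
  have count: "sum_list (map T profile_P) - sum_list (map T profile_Q)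
      = (\<Sum>j<17. multiplicity_diff ! j * T j)" for T :: "nat \<Rightarrow> real"
    by (simp add: profile_P_def profile_Q_def multiplicity_diff_def numeral_eq_Suc lessThan_Suc
        algebra_simps)
  have profile_sum: "(\<Sum>v\<in>std_dodecahedron_vertices. dist M v powr l)
      = sum_list (map (\<lambda>i. sqrt (sq_dists ! i) powr l) is)"
    if "map (dist M) std_vertex_list = map (\<lambda>i. sqrt (sq_dists ! i)) is" for M "is"
  proof -
    have "(\<Sum>v\<in>std_dodecahedron_vertices. dist M v powr l)
        = sum_list (map (\<lambda>d. d powr l) (map (dist M) std_vertex_list))"
      by (simp add: sum_std_vertices comp_def)
    also have "\<dots> = sum_list (map (\<lambda>i. sqrt (sq_dists ! i) powr l) is)"
      unfolding that by (simp add: comp_def)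
    finally show ?thesis .
  qed
  show ?thesis
    unfolding profile_sum[OF dist_profile_P] profile_sum[OF dist_profile_Q] by (rule count)
qed

lemma sign_changes_multiplicity_diff: "card (sign_changes (\<lambda>j. multiplicity_diff ! j) 17) \<le> 8"
proof -
  have "card (sign_changes (\<lambda>j. multiplicity_diff ! j) 17)
      \<le> length (filter (\<lambda>k. multiplicity_diff ! k * multiplicity_diff ! Suc k < 0) [0..<17 - 1])"
    unfolding sign_changes_upt by (rule card_length)
  also have "\<dots> = 8" by (simp add: multiplicity_diff_def upt_rec)
  finally show ?thesis .
qed

lemma test_points_equal_power_sums:
  defines "E \<equiv> {l. (\<Sum>v\<in>std_dodecahedron_vertices. dist test_P v powr l)
                    = (\<Sum>v\<in>std_dodecahedron_vertices. dist test_Q v powr l)}"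
  shows "finite E \<and> card E \<le> 8"
proof -
  have "multiplicity_diff ! j \<noteq> 0" if "j < 17" for j
    using nth_mem[of j multiplicity_diff] that by (auto simp: multiplicity_diff_def)
  moreover have "strict_mono_on {..<17} (\<lambda>j. sqrt (sq_dists ! j))"
    using sorted_wrt_nth_less[OF sq_dists_sorted]
    by (intro strict_mono_onI) (simp add: sq_dists_def)
  ultimately have "finite {l. (\<Sum>j<17. multiplicity_diff ! j * sqrt (sq_dists ! j) powr l) = 0}
      \<and> card {l. (\<Sum>j<17. multiplicity_diff ! j * sqrt (sq_dists ! j) powr l) = 0}
         \<le> card (sign_changes (\<lambda>j. multiplicity_diff ! j) 17)"
    using powr_sum_zeros_le_sign_changes[of 17] sq_dists_pos by simp
  moreover have "E = {l. (\<Sum>j<17. multiplicity_diff ! j * sqrt (sq_dists ! j) powr l) = 0}"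
  proof -
    have "E = {l. (\<Sum>v\<in>std_dodecahedron_vertices. dist test_P v powr l)
                   - (\<Sum>v\<in>std_dodecahedron_vertices. dist test_Q v powr l) = 0}"
      unfolding E_def by simp
    then show ?thesis unfolding test_points_power_sum_difference .
  qed
  ultimately show ?thesis using sign_changes_multiplicity_diff by simp
qed

(* By the normal form, V is the image of the standard dodecahedron
   under a similarity G centred at c with ratio r = R / sqrt 3, so G maps test_P and
   test_Q to non-vertex points of the sphere.  If the power sum is constant
   there, it takes equal values at these two points, and power sums transform under G
   by the factor r powr l.  Hence every admissible l is among the at most eight
   exponents of test_points_equal_power_sums. *)
theorem proposition4p1:
  fixes V :: "(real^3) set" and c :: "real^3" and R :: real
  assumes "regular_dodecahedron_vertices V"
    and "V \<subseteq> sphere c R"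
  shows "finite {l. \<exists>C. \<forall>M \<in> sphere c R - V. (\<Sum>A\<in>V. dist M A powr (l::real)) = C}
       \<and> card {l. \<exists>C. \<forall>M \<in> sphere c R - V. (\<Sum>A\<in>V. dist M A powr (l::real)) = C} \<le> 8"
proof -
  obtain r f where r: "r > 0" and f: "orthogonal_transformation f"
    and V: "V = (\<lambda>v. c + r *\<^sub>R f v) ` std_dodecahedron_vertices" and R: "R = r * sqrt 3"
    using regular_dodecahedron_normal_form[OF assms] .
  define G where "G w = c + r *\<^sub>R f w" for w
  have on_sphere: "G test_P \<in> sphere c R - V" "G test_Q \<in> sphere c R - V"
    unfolding G_def V R using similarity_maps_sphere[OF f r] norm_test_P norm_test_Q
      test_points_not_vertices by blast+
  have sums: "(\<Sum>A\<in>V. dist (G w) A powr l)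
      = r powr l * (\<Sum>v\<in>std_dodecahedron_vertices. dist w v powr l)" for w l
    unfolding V G_def using similarity_powr_sum[OF f r] by (simp add: std_vertex_list_set)
  have "{l. \<exists>C. \<forall>M \<in> sphere c R - V. (\<Sum>A\<in>V. dist M A powr l) = C}
      \<subseteq> {l. (\<Sum>v\<in>std_dodecahedron_vertices. dist test_P v powr l)
             = (\<Sum>v\<in>std_dodecahedron_vertices. dist test_Q v powr l)}"
  proof (intro subsetI CollectI)
    fix l assume "l \<in> {l. \<exists>C. \<forall>M \<in> sphere c R - V. (\<Sum>A\<in>V. dist M A powr l) = C}"
    then have "(\<Sum>A\<in>V. dist (G test_P) A powr l) = (\<Sum>A\<in>V. dist (G test_Q) A powr l)"
      using on_sphere by auto
    then show "(\<Sum>v\<in>std_dodecahedron_vertices. dist test_P v powr l)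
        = (\<Sum>v\<in>std_dodecahedron_vertices. dist test_Q v powr l)" using r by (simp add: sums)
  qed
  then show ?thesis
    using test_points_equal_power_sums by (meson card_mono finite_subset order_trans)
qed

end
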